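(* Let $\Lambda=KQ/\langle I\rangle$ be a $1$-Gorenstein gentle algebra over an algebraically closed field $K$, let $\Gamma=KQ^{Aus}/\langle I^{Aus}\rangle$ be its Cohen–Macaulay Auslander algebra and $\Phi$ the functor described in the context. Let $N=((N_i)_{i\in Q_0},(N_\alpha)_{\alpha\in Q_1})$ be a Gorenstein projective $\Lambda$-module, so that $\widehat{N}=\Phi(N)$ has underlying space $\bigoplus_{i\in Q_0}\widehat{N}_i\oplus\bigoplus_{\alpha\in Q_1^{cyc}}\widehat{N}_\alpha$. Then: (i) for every $i\in Q_0$, $\dim\widehat{N}_i=\dim N_i=\dim\mathrm{Hom}_\Lambda(P_i,N)$, where $P_i=\Lambda e_i$ is the indecomposable projective $\Lambda$-module at $i$; (ii) for every $\alpha\in Q_1^{cyc}$, $\dim\widehat{N}_\alpha=\dim\mathrm{Hom}_\Lambda(P_{s(\alpha)},N)-\dim\mathrm{Hom}_\Lambda(R(\beta),N)$, where $\beta$ is the arrow satisfying $\alpha\beta\in I$ and $R(\beta)=\Lambda\beta$.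
   Context: Conventions: arrows $\alpha:s(\alpha)\to t(\alpha)$; paths composed right to left ($\alpha\beta$ means $\beta$ then $\alpha$, so $t(\beta)=s(\alpha)$). A gentle algebra is a finite dimensional $\Lambda=KQ/\langle I\rangle$ where $I$ is a set of length-$2$ paths such that: each vertex is the start of at most two and the end of at most two arrows; for each arrow $\alpha$ there is at most one arrow $\beta$ with $t(\beta)=s(\alpha)$, $\alpha\beta\notin I$, at most one $\gamma$ with $s(\gamma)=t(\alpha)$, $\gamma\alpha\notin I$, at most one $\beta$ with $t(\beta)=s(\alpha)$, $\alpha\beta\in I$, and at most one $\gamma$ with $s(\gamma)=t(\alpha)$, $\gamma\alpha\in I$. $\Lambda$ is $1$-Gorenstein if its injective dimension as a left and as a right module is at most $1$. Modules are finite dimensional left modules (representations of $(Q,I)$). A $\Lambda$-module $G$ is Gorenstein projective if there is an exact complex $\cdots\to P^{-1}\to P^0\xrightarrow{d^0}P^1\to\cdots$ of projective $\Lambda$-modules which remains exact under $\mathrm{Hom}_\Lambda(-,\Lambda)$ and with $G\cong\mathrm{Ker}\,d^0$. $\mathcal{C}(\Lambda)$ is the set of repetition-free cyclic paths $\alpha_1\cdots\alpha_n$ (up to cyclic permutation) with $\alpha_i\alpha_{i+1}\in I$ for all $i$ (indices mod $n$); $Q_1^{cyc}$ is the set of arrows on such cycles, $Q_1^{ncyc}=Q_1\setminus Q_1^{cyc}$. For each arrow $\gamma$, $R(\gamma)$ denotes the left ideal $\Lambda\gamma$. $Q^{Aus}$ has vertices $Q_0\sqcup Q_1^{cyc}$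 and arrows $Q_1^{ncyc}\sqcup\{\alpha^+:s(\alpha)\to\alpha\}_{\alpha\in Q_1^{cyc}}\sqcup\{\alpha^-:\alpha\to t(\alpha)\}_{\alpha\in Q_1^{cyc}}$; $I^{Aus}=\{\beta^+\alpha^-\mid\beta\alpha\in I,\ \alpha,\beta\in Q_1^{cyc}\}\cup\{\beta\alpha\mid\beta\alpha\in I,\ \alpha,\beta\in Q_1^{ncyc}\}$; $\Gamma=KQ^{Aus}/\langle I^{Aus}\rangle$. $\Phi(M)=\widehat{M}$ has $\widehat{M}_i=M_i$ ($i\in Q_0$), $\widehat{M}_\alpha=\mathrm{Im}\,M_\alpha$ ($\alpha\in Q_1^{cyc}$), $\widehat{M}_\beta=M_\beta$ ($\beta\in Q_1^{ncyc}$), and $\widehat{M}_{\alpha^+}$, $\widehat{M}_{\alpha^-}$ the surjection $M_{s(\alpha)}\to\mathrm{Im}\,M_\alpha$ and inclusion $\mathrm{Im}\,M_\alpha\to M_{t(\alpha)}$ factoring $M_\alpha$. *)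

theory Defs
  imports Main "HOL-Library.Function_Algebras" "HOL-Computational_Algebra.Polynomial"
begin

definition vscale :: "'k::field \<Rightarrow> ('u \<Rightarrow> 'k) \<Rightarrow> ('u \<Rightarrow> 'k)" where
  "vscale c v = (\<lambda>u. c * v u)"

definition vdim :: "('u \<Rightarrow> 'k::field) set \<Rightarrow> nat" where
  "vdim S = vector_space.dim (vscale :: 'k \<Rightarrow> _) S"

definition vsubspace :: "('u \<Rightarrow> 'k::field) set \<Rightarrow> bool" where
  "vsubspace S = module.subspace (vscale :: 'k \<Rightarrow> _) S"

definition fin_dim :: "('u \<Rightarrow> 'k::field) set \<Rightarrow> bool" where
  "fin_dim S = (\<exists>B. finite B \<and> B \<subseteq> S \<and> S \<subseteq> module.span (vscale :: 'k \<Rightarrow> _) B)"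

definition lin_on :: "('u \<Rightarrow> 'k::field) set \<Rightarrow> (('u \<Rightarrow> 'k) \<Rightarrow> ('w \<Rightarrow> 'k)) \<Rightarrow> bool" where
  "lin_on V f = ((\<forall>x\<in>V. \<forall>y\<in>V. f (x + y) = f x + f y) \<and> (\<forall>c x. x \<in> V \<longrightarrow> f (vscale c x) = vscale c (f x)))"

record ('v, 'a) quiver =
  verts :: "'v set"
  arrs :: "'a set"
  src :: "'a \<Rightarrow> 'v"
  tgt :: "'a \<Rightarrow> 'v"

text \<open>A relation is a pair (al, be) standing for the length-2 path al be
  (first be, then al; so tgt be = src al).\<close>

definition quiver_opp :: "('v, 'a) quiver \<Rightarrow> ('v, 'a) quiver" where
  "quiver_opp Q = \<lparr>verts = verts Q, arrs = arrs Q, src = tgt Q, tgt = src Q\<rparr>"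

definition rel_opp :: "('a \<times> 'a) set \<Rightarrow> ('a \<times> 'a) set" where
  "rel_opp I = {(b, a). (a, b) \<in> I}"

text \<open>A path is a pair (i, ps): start vertex i and arrow list ps = [a1,...,an]
  denoting the composite a1 a2 ... an (an is traversed first, a1 last).\<close>

definition is_path :: "('v, 'a) quiver \<Rightarrow> 'v \<times> 'a list \<Rightarrow> bool" where
  "is_path Q p = (fst p \<in> verts Q \<and> set (snd p) \<subseteq> arrs Q \<and>
     (snd p \<noteq> [] \<longrightarrow> src Q (last (snd p)) = fst p) \<and>
     (\<forall>k. Suc k < length (snd p) \<longrightarrow> src Q (snd p ! k) = tgt Q (snd p ! Suc k)))"

definition path_end :: "('v, 'a) quiver \<Rightarrow> 'v \<times> 'a list \<Rightarrow> 'v" where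
  "path_end Q p = (case snd p of [] \<Rightarrow> fst p | a # _ \<Rightarrow> tgt Q a)"

text \<open>Paths not containing a relation as a subpath: these form a basis of KQ/<I>.\<close>
definition nz_path :: "('v, 'a) quiver \<Rightarrow> ('a \<times> 'a) set \<Rightarrow> 'v \<times> 'a list \<Rightarrow> bool" where
  "nz_path Q I p = (is_path Q p \<and>
     (\<forall>k. Suc k < length (snd p) \<longrightarrow> (snd p ! k, snd p ! Suc k) \<notin> I))"

definition gentle :: "('v, 'a) quiver \<Rightarrow> ('a \<times> 'a) set \<Rightarrow> bool" where
  "gentle Q I = (finite (verts Q) \<and> finite (arrs Q) \<and>
     (\<forall>a\<in>arrs Q. src Q a \<in> verts Q \<and> tgt Q a \<in> verts Q) \<and>
     I \<subseteq> {(a, b). a \<in> arrs Q \<and> b \<in> arrs Q \<and> tgt Q b = src Q a} \<and>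
     (\<forall>i\<in>verts Q. card {a\<in>arrs Q. src Q a = i} \<le> 2 \<and> card {a\<in>arrs Q. tgt Q a = i} \<le> 2) \<and>
     (\<forall>a\<in>arrs Q.
        card {b\<in>arrs Q. tgt Q b = src Q a \<and> (a, b) \<notin> I} \<le> 1 \<and>
        card {c\<in>arrs Q. src Q c = tgt Q a \<and> (c, a) \<notin> I} \<le> 1 \<and>
        card {b\<in>arrs Q. tgt Q b = src Q a \<and> (a, b) \<in> I} \<le> 1 \<and>
        card {c\<in>arrs Q. src Q c = tgt Q a \<and> (c, a) \<in> I} \<le> 1) \<and>
     finite {p. nz_path Q I p})"

definition cyc_arrows :: "('v, 'a) quiver \<Rightarrow> ('a \<times> 'a) set \<Rightarrow> 'a set" where
  "cyc_arrows Q I = {a \<in> arrs Q. \<exists>cs. cs \<noteq> [] \<and> distinct cs \<and> set cs \<subseteq> arrs Q \<and> a \<in> set cs \<and>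
       (\<forall>k<length cs. (cs ! k, cs ! ((Suc k) mod length cs)) \<in> I)}"

record ('v, 'a, 'u, 'k) rep =
  space :: "'v \<Rightarrow> ('u \<Rightarrow> 'k) set"
  rmap :: "'a \<Rightarrow> ('u \<Rightarrow> 'k) \<Rightarrow> ('u \<Rightarrow> 'k)"

definition is_module :: "('v, 'a) quiver \<Rightarrow> ('a \<times> 'a) set \<Rightarrow> ('v, 'a, 'u, 'k::field) rep \<Rightarrow> bool" where
  "is_module Q I M = ((\<forall>i\<in>verts Q. vsubspace (space M i) \<and> fin_dim (space M i)) \<and>
     (\<forall>a\<in>arrs Q. lin_on (space M (src Q a)) (rmap M a) \<and>
        (\<forall>x\<in>space M (src Q a). rmap M a x \<in> space M (tgt Q a))) \<and>
     (\<forall>(a, b)\<in>I. \<forall>x\<in>space M (src Q b). rmap M a (rmap M b x) = 0))"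

text \<open>Module homomorphisms (morphisms of representations), made extensional so that
  the Hom-set is a genuine vector space of functions.\<close>
definition Hom :: "('v, 'a) quiver \<Rightarrow> ('v, 'a, 'u, 'k::field) rep \<Rightarrow> ('v, 'a, 'w, 'k) rep \<Rightarrow>
    ('v \<Rightarrow> ('u \<Rightarrow> 'k) \<Rightarrow> ('w \<Rightarrow> 'k)) set" where
  "Hom Q M N = {f. (\<forall>i. i \<notin> verts Q \<longrightarrow> f i = (\<lambda>x. 0)) \<and>
     (\<forall>i\<in>verts Q. lin_on (space M i) (f i) \<and> (\<forall>x\<in>space M i. f i x \<in> space N i) \<and>
        (\<forall>x. x \<notin> space M i \<longrightarrow> f i x = 0)) \<and>
     (\<forall>a\<in>arrs Q. \<forall>x\<in>space M (src Q a). f (tgt Q a) (rmap M a x) = rmap N a (f (src Q a) x))}"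

definition hscale :: "'k::field \<Rightarrow> ('v \<Rightarrow> ('u \<Rightarrow> 'k) \<Rightarrow> ('w \<Rightarrow> 'k)) \<Rightarrow> ('v \<Rightarrow> ('u \<Rightarrow> 'k) \<Rightarrow> ('w \<Rightarrow> 'k))" where
  "hscale c f = (\<lambda>i x. vscale c (f i x))"

definition hdim :: "('v \<Rightarrow> ('u \<Rightarrow> 'k::field) \<Rightarrow> ('w \<Rightarrow> 'k)) set \<Rightarrow> nat" where
  "hdim H = vector_space.dim (hscale :: 'k \<Rightarrow> _) H"

definition hcomp :: "('v \<Rightarrow> ('w \<Rightarrow> 'k) \<Rightarrow> ('x \<Rightarrow> 'k)) \<Rightarrow> ('v \<Rightarrow> ('u \<Rightarrow> 'k) \<Rightarrow> ('w \<Rightarrow> 'k)) \<Rightarrow>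
    ('v \<Rightarrow> ('u \<Rightarrow> 'k) \<Rightarrow> ('x \<Rightarrow> 'k))" where
  "hcomp g f = (\<lambda>i x. g i (f i x))"

definition isomorphic :: "('v, 'a) quiver \<Rightarrow> ('v, 'a, 'u, 'k::field) rep \<Rightarrow> ('v, 'a, 'w, 'k) rep \<Rightarrow> bool" where
  "isomorphic Q M N = (\<exists>f\<in>Hom Q M N. \<exists>g\<in>Hom Q N M.
     (\<forall>i\<in>verts Q. (\<forall>x\<in>space M i. g i (f i x) = x) \<and> (\<forall>y\<in>space N i. f i (g i y) = y)))"

definition mor_surj :: "('v, 'a) quiver \<Rightarrow> ('v, 'a, 'u, 'k::field) rep \<Rightarrow> ('v, 'a, 'w, 'k) rep \<Rightarrow>
    ('v \<Rightarrow> ('u \<Rightarrow> 'k) \<Rightarrow> ('w \<Rightarrow> 'k)) \<Rightarrow> bool" where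
  "mor_surj Q M N f = (\<forall>i\<in>verts Q. f i ` space M i = space N i)"

definition mor_inj :: "('v, 'a) quiver \<Rightarrow> ('v, 'a, 'u, 'k::field) rep \<Rightarrow>
    ('v \<Rightarrow> ('u \<Rightarrow> 'k) \<Rightarrow> ('w \<Rightarrow> 'k)) \<Rightarrow> bool" where
  "mor_inj Q M f = (\<forall>i\<in>verts Q. inj_on (f i) (space M i))"

text \<open>Projective and injective modules, via the lifting / extension properties,
  tested against all (finite dimensional) modules realised in the same ambient
  type (which is infinite dimensional, so every f.d. module is realised up to iso).\<close>
definition projective :: "('v, 'a) quiver \<Rightarrow> ('a \<times> 'a) set \<Rightarrow> ('v, 'a, 'u, 'k::field) rep \<Rightarrow> bool" where
  "projective Q I P = (is_module Q I P \<and>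
     (\<forall>(M :: ('v, 'a, 'u, 'k) rep) (N :: ('v, 'a, 'u, 'k) rep) g f. is_module Q I M \<and> is_module Q I N \<and> g \<in> Hom Q M N \<and> mor_surj Q M N g \<and>
        f \<in> Hom Q P N \<longrightarrow> (\<exists>h\<in>Hom Q P M. hcomp g h = f)))"

definition injective :: "('v, 'a) quiver \<Rightarrow> ('a \<times> 'a) set \<Rightarrow> ('v, 'a, 'u, 'k::field) rep \<Rightarrow> bool" where
  "injective Q I J = (is_module Q I J \<and>
     (\<forall>(M :: ('v, 'a, 'u, 'k) rep) (N :: ('v, 'a, 'u, 'k) rep) g f. is_module Q I M \<and> is_module Q I N \<and> g \<in> Hom Q M N \<and> mor_inj Q M g \<and>
        f \<in> Hom Q M J \<longrightarrow> (\<exists>h\<in>Hom Q N J. hcomp h g = f)))"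

text \<open>Given a set S of nonzero paths closed under left multiplication by arrows
  (a left ideal, spanned by paths), the corresponding left module: at vertex j the
  functions supported on paths of S ending at j; an arrow a acts by p |-> a p.\<close>
definition path_module :: "('v, 'a) quiver \<Rightarrow> ('v \<times> 'a list) set \<Rightarrow>
    ('v, 'a, 'v \<times> 'a list, 'k::field) rep" where
  "path_module Q S = \<lparr>space = (\<lambda>j. {v. \<forall>q. v q \<noteq> 0 \<longrightarrow> q \<in> S \<and> path_end Q q = j}),
     rmap = (\<lambda>a v q. case snd q of [] \<Rightarrow> 0
        | b # q' \<Rightarrow> (if b = a \<and> q \<in> S \<and> (fst q, q') \<in> S then v (fst q, q') else 0))\<rparr>"

definition reg_module :: "('v, 'a) quiver \<Rightarrow> ('a \<times> 'a) set \<Rightarrow> ('v, 'a, 'v \<times> 'a list, 'k::field) rep" where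
  "reg_module Q I = path_module Q {p. nz_path Q I p}"

definition proj_module :: "('v, 'a) quiver \<Rightarrow> ('a \<times> 'a) set \<Rightarrow> 'v \<Rightarrow> ('v, 'a, 'v \<times> 'a list, 'k::field) rep" where
  "proj_module Q I i = path_module Q {p. nz_path Q I p \<and> fst p = i}"

text \<open>R(g) = Lambda g: spanned by the nonzero paths p g (i.e. whose first arrow is g).\<close>
definition R_module :: "('v, 'a) quiver \<Rightarrow> ('a \<times> 'a) set \<Rightarrow> 'a \<Rightarrow> ('v, 'a, 'v \<times> 'a list, 'k::field) rep" where
  "R_module Q I g = path_module Q {p. nz_path Q I p \<and> snd p \<noteq> [] \<and> last (snd p) = g}"

definition injdim_reg_le1 :: "('v, 'a) quiver \<Rightarrow> ('a \<times> 'a) set \<Rightarrow> 'k::field itself \<Rightarrow> bool" where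
  "injdim_reg_le1 Q I (TYPE('k)) = (\<exists>(J0 :: ('v, 'a, 'v \<times> 'a list, 'k) rep) (J1 :: ('v, 'a, 'v \<times> 'a list, 'k) rep) f g.
     injective Q I J0 \<and> injective Q I J1 \<and>
     f \<in> Hom Q (reg_module Q I) J0 \<and> mor_inj Q (reg_module Q I) f \<and>
     g \<in> Hom Q J0 J1 \<and> mor_surj Q J0 J1 g \<and>
     (\<forall>i\<in>verts Q. f i ` space (reg_module Q I) i = {y\<in>space J0 i. g i y = 0}))"

text \<open>Injective dimension of Lambda both as a left module and as a right module
  (= left module over the opposite algebra K Q^op / <I^op>) is at most 1.\<close>
definition one_gorenstein :: "('v, 'a) quiver \<Rightarrow> ('a \<times> 'a) set \<Rightarrow> 'k::field itself \<Rightarrow> bool" where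
  "one_gorenstein Q I K = (injdim_reg_le1 Q I K \<and> injdim_reg_le1 (quiver_opp Q) (rel_opp I) K)"

definition kernel_module :: "('v, 'a, 'u, 'k::field) rep \<Rightarrow> ('v \<Rightarrow> ('u \<Rightarrow> 'k) \<Rightarrow> ('w \<Rightarrow> 'k)) \<Rightarrow>
    ('v, 'a, 'u, 'k) rep" where
  "kernel_module M d = \<lparr>space = (\<lambda>i. {x\<in>space M i. d i x = 0}), rmap = rmap M\<rparr>"

definition gorenstein_projective :: "('v, 'a) quiver \<Rightarrow> ('a \<times> 'a) set \<Rightarrow> ('v, 'a, 'u, 'k::field) rep \<Rightarrow> bool" where
  "gorenstein_projective Q I G = (is_module Q I G \<and>
     (\<exists>(P :: int \<Rightarrow> ('v, 'a, 'v \<times> 'a list, 'k) rep) d.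
        (\<forall>n. projective Q I (P n) \<and> d n \<in> Hom Q (P n) (P (n + 1))) \<and>
        (\<forall>n. \<forall>i\<in>verts Q. d (n - 1) i ` space (P (n - 1)) i = {y\<in>space (P n) i. d n i y = 0}) \<and>
        (\<forall>n. {h\<in>Hom Q (P n) (reg_module Q I). \<forall>i\<in>verts Q. \<forall>x\<in>space (P (n - 1)) i. h i (d (n - 1) i x) = 0}
             = (\<lambda>h. hcomp h (d n)) ` Hom Q (P (n + 1)) (reg_module Q I)) \<and>
        isomorphic Q G (kernel_module (P 0) (d 0))))"

section \<open>The functor Phi (only what is needed: the representation of Q^Aus)\<close>

text \<open>Vertices of Q^Aus: Inl i (i in Q_0) and Inr a (a in Q_1^cyc).
  Arrows of Q^Aus: Inl b (b non-cyclic), Inr (Inl a) = a^+, Inr (Inr a) = a^-.\<close>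
definition aus_quiver :: "('v, 'a) quiver \<Rightarrow> ('a \<times> 'a) set \<Rightarrow> ('v + 'a, 'a + 'a + 'a) quiver" where
  "aus_quiver Q I = \<lparr>verts = Inl ` verts Q \<union> Inr ` cyc_arrows Q I,
     arrs = Inl ` (arrs Q - cyc_arrows Q I) \<union> Inr ` Inl ` cyc_arrows Q I \<union> Inr ` Inr ` cyc_arrows Q I,
     src = (\<lambda>x. case x of Inl b \<Rightarrow> Inl (src Q b) | Inr (Inl a) \<Rightarrow> Inl (src Q a) | Inr (Inr a) \<Rightarrow> Inr a),
     tgt = (\<lambda>x. case x of Inl b \<Rightarrow> Inl (tgt Q b) | Inr (Inl a) \<Rightarrow> Inr a | Inr (Inr a) \<Rightarrow> Inl (tgt Q a))\<rparr>"

definition aus_rel :: "('v, 'a) quiver \<Rightarrow> ('a \<times> 'a) set \<Rightarrow> (('a + 'a + 'a) \<times> ('a + 'a + 'a)) set" where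
  "aus_rel Q I = {(Inr (Inl b), Inr (Inr a)) | b a. (b, a) \<in> I \<and> a \<in> cyc_arrows Q I \<and> b \<in> cyc_arrows Q I}
     \<union> {(Inl b, Inl a) | b a. (b, a) \<in> I \<and> a \<notin> cyc_arrows Q I \<and> b \<notin> cyc_arrows Q I}"

definition Phi :: "('v, 'a) quiver \<Rightarrow> ('a \<times> 'a) set \<Rightarrow> ('v, 'a, 'u, 'k::field) rep \<Rightarrow>
    ('v + 'a, 'a + 'a + 'a, 'u, 'k) rep" where
  "Phi Q I M = \<lparr>space = (\<lambda>x. case x of Inl i \<Rightarrow> space M i
                   | Inr a \<Rightarrow> rmap M a ` space M (src Q a)),
     rmap = (\<lambda>x. case x of Inl b \<Rightarrow> rmap M b | Inr (Inl a) \<Rightarrow> rmap M a | Inr (Inr a) \<Rightarrow> (\<lambda>y. y))\<rparr>"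

end

theory Submission
  imports Defs
begin

text \<open>For a nonzero path \<open>p\<close> from \<open>s\<close> to \<open>j\<close>, the left ideal \<open>\<Lambda>p\<close> has as basis the nonzero paths
  \<open>w p\<close>, and a morphism \<open>\<Lambda>p \<rightarrow> N\<close> is determined by the image \<open>x \<in> N\<^sub>j\<close> of \<open>p\<close>; the only
  constraint on \<open>x\<close> is \<open>c x = 0\<close> for every arrow \<open>c\<close> with \<open>c p = 0\<close> in \<open>\<Lambda>\<close>. Hence
  \<open>Hom(\<Lambda>p, N)\<close> is isomorphic to the space of such \<open>x\<close>. For \<open>p = e\<^sub>i\<close> there is no constraint,
  which gives \<open>Hom(P\<^sub>i, N) \<cong> N\<^sub>i\<close>. For \<open>p = \<beta>\<close> with \<open>\<alpha>\<beta> \<in> I\<close>, gentleness makes \<open>\<alpha>\<close> the only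
  arrow killing \<open>\<beta>\<close>, so \<open>Hom(R(\<beta>), N) \<cong> Ker N\<^sub>\<alpha>\<close>, and rank--nullity for \<open>N\<^sub>\<alpha>\<close> gives (ii).\<close>

lemma vector_space_vscale: "vector_space (vscale :: 'k::field \<Rightarrow> ('u \<Rightarrow> 'k) \<Rightarrow> _)"
  unfolding vector_space_def module_def vscale_def by (auto simp: fun_eq_iff algebra_simps)

lemma vector_space_hscale: "vector_space (hscale :: 'k::field \<Rightarrow> ('v \<Rightarrow> ('u \<Rightarrow> 'k) \<Rightarrow> ('w \<Rightarrow> 'k)) \<Rightarrow> _)"
  unfolding vector_space_def module_def hscale_def vscale_def by (auto simp: fun_eq_iff algebra_simps)

lemma module_vscale: "module (vscale :: 'k::field \<Rightarrow> ('u \<Rightarrow> 'k) \<Rightarrow> _)"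
  using vector_space_vscale by (simp add: vector_space_def module_def)

lemma module_hscale: "module (hscale :: 'k::field \<Rightarrow> ('v \<Rightarrow> ('u \<Rightarrow> 'k) \<Rightarrow> ('w \<Rightarrow> 'k)) \<Rightarrow> _)"
  using vector_space_hscale by (simp add: vector_space_def module_def)

lemma vector_space_pair_vscale:
  "vector_space_pair (vscale :: 'k::field \<Rightarrow> ('u \<Rightarrow> 'k) \<Rightarrow> _) (vscale :: 'k \<Rightarrow> ('w \<Rightarrow> 'k) \<Rightarrow> _)"
  by (simp add: vector_space_pair_def vector_space_vscale)

lemma vector_space_pair_hscale_vscale:
  "vector_space_pair (hscale :: 'k::field \<Rightarrow> ('v \<Rightarrow> ('x \<Rightarrow> 'k) \<Rightarrow> ('w \<Rightarrow> 'k)) \<Rightarrow> _)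
     (vscale :: 'k \<Rightarrow> ('u \<Rightarrow> 'k) \<Rightarrow> _)"
  by (simp add: vector_space_pair_def vector_space_vscale vector_space_hscale)

context vector_space begin

lemma independent_span_Diff_disjoint:
  assumes B: "independent B" "finite B" and AB: "A \<subseteq> B"
    and x: "x \<in> span A" "x \<in> span (B - A)"
  shows "x = 0"
proof -
  obtain u where u: "x = (\<Sum>v\<in>A. u v *s v)"
    using x(1) span_finite[OF finite_subset[OF AB B(2)]] by auto
  obtain w where w: "x = (\<Sum>v\<in>B - A. w v *s v)"
    using x(2) span_finite[of "B - A"] B(2) by auto
  define t where "t v = (if v \<in> A then u v else - w v)" for v
  have "(\<Sum>v\<in>B. t v *s v) = (\<Sum>v\<in>A. t v *s v) + (\<Sum>v\<in>B - A. t v *s v)"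
    using sum.subset_diff[OF AB B(2)] by (simp add: add.commute)
  also have "(\<Sum>v\<in>A. t v *s v) = x" unfolding u t_def by (rule sum.cong) auto
  also have "(\<Sum>v\<in>B - A. t v *s v) = - x" unfolding w t_def by (simp add: sum_negf[symmetric])
  finally have "(\<Sum>v\<in>B. t v *s v) = 0" by simp
  then have "\<forall>v\<in>A. t v = 0" using independentD[OF B subset_refl] AB by blast
  then show ?thesis unfolding u t_def by simp
qed

end

context vector_space_pair begin

text \<open>The library states this only for a finite dimensional domain, but the proof does not
  use it; here the domain is a space of morphisms inside an infinite dimensional function space.\<close>
lemma dim_image_eq_inj_on:
  assumes lf: "Vector_Spaces.linear s1 s2 f" and fi: "inj_on f (vs1.span S)"
  shows "vs2.dim (f ` S) = vs1.dim S"
proof -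
  interpret lf: Vector_Spaces.linear s1 s2 f by fact
  obtain B where B: "B \<subseteq> S" "vs1.independent B" "S \<subseteq> vs1.span B" "card B = vs1.dim S"
    using vs1.basis_exists[of S] by auto
  then have "vs1.span S = vs1.span B"
    using vs1.span_mono[of B S] vs1.span_mono[of S "vs1.span B"] vs1.span_span[of B] by auto
  moreover have "card (f ` B) = card B"
    using assms card_image[of f B] inj_on_subset[of f "vs1.span S" B] B vs1.span_superset by auto
  ultimately show ?thesis
    by (metis B(2) B(4) fi lf.dependent_inj_imageD lf.span_image vs2.dim_eq_card_independent vs2.dim_span)
qed

text \<open>A basis \<open>A\<close> of the kernel extends to a basis \<open>B\<close> of \<open>V\<close>, and \<open>f\<close> maps \<open>B - A\<close>
  injectively onto a spanning set of the image.\<close>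
lemma rank_nullity:
  assumes lf: "Vector_Spaces.linear s1 s2 f" and V: "vs1.subspace V"
    and F: "finite F" "V \<subseteq> vs1.span F"
  shows "vs1.dim V = vs1.dim {x\<in>V. f x = 0} + vs2.dim (f ` V)"
proof -
  interpret lf: Vector_Spaces.linear s1 s2 f by fact
  define K where "K = {x\<in>V. f x = 0}"
  obtain A where A: "A \<subseteq> K" "vs1.independent A" "K \<subseteq> vs1.span A" "card A = vs1.dim K"
    using vs1.basis_exists[of K] by auto
  obtain B where B: "A \<subseteq> B" "B \<subseteq> V" "vs1.independent B" "V \<subseteq> vs1.span B"
    using vs1.maximal_independent_subset_extend[of A V] A(1,2) K_def by blast
  have fin_B: "finite B" using vs1.independent_span_bound[OF F(1) B(3)] B(2) F(2) by blast
  have span_B: "vs1.span B = V" using B(2,4) V vs1.span_minimal by blast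
  define C where "C = B - A"
  have card_B: "vs1.dim V = card A + card C"
    using vs1.basis_card_eq_dim[OF B(2,4,3)] card_Diff_subset[OF finite_subset[OF B(1) fin_B] B(1)]
      card_mono[OF fin_B B(1)] C_def by simp
  have "f ` V = vs2.span (f ` B)" using lf.span_image span_B by simp
  also have "\<dots> = vs2.span (f ` C)"
  proof (rule vs2.span_eq[THEN iffD2], rule conjI)
    have "f b \<in> vs2.span (f ` C)" if "b \<in> B" for b
    proof (cases "b \<in> A")
      case True
      then show ?thesis using A(1) K_def vs2.span_zero by auto
    qed (use that C_def in \<open>auto intro: vs2.span_base\<close>)
    then show "f ` B \<subseteq> vs2.span (f ` C)" by blast
  qed (use C_def in \<open>auto intro: vs2.span_base\<close>)
  finally have image_span_C: "f ` V = vs2.span (f ` C)" .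
  have "inj_on f (vs1.span C)"
  proof (subst lf.inj_on_iff_eq_0[OF vs1.subspace_span], intro ballI impI)
    fix x assume x: "x \<in> vs1.span C" "f x = 0"
    have "x \<in> V" using x(1) span_B vs1.span_mono[of C B] C_def by blast
    then have "x \<in> vs1.span A" using x(2) A(3) K_def by blast
    then show "x = 0" using vs1.independent_span_Diff_disjoint[OF B(3) fin_B B(1)] x(1) C_def by blast
  qed
  then have "vs2.dim (f ` V) = card C"
    using image_span_C dim_image_eq_inj_on[OF lf] vs1.dim_eq_card_independent C_def
      vs1.independent_mono[OF B(3)] vs2.dim_span by (metis Diff_subset)
  then show ?thesis using card_B A(4) K_def by simp
qed

end

lemma vsubspace_iff:
  "vsubspace V \<longleftrightarrow> 0 \<in> V \<and> (\<forall>x\<in>V. \<forall>y\<in>V. x + y \<in> V) \<and> (\<forall>c. \<forall>x\<in>V. vscale c x \<in> V)"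
  by (simp add: vsubspace_def module.subspace_def[OF module_vscale])

lemma vsubspace_0: "vsubspace V \<Longrightarrow> 0 \<in> V"
  by (simp add: vsubspace_iff)

lemma vsubspace_add: "vsubspace V \<Longrightarrow> x \<in> V \<Longrightarrow> y \<in> V \<Longrightarrow> x + y \<in> V"
  by (simp add: vsubspace_iff)

lemma vsubspace_scale: "vsubspace V \<Longrightarrow> x \<in> V \<Longrightarrow> vscale c x \<in> V"
  by (simp add: vsubspace_iff)

lemma vsubspace_sum: "vsubspace V \<Longrightarrow> (\<And>p. p \<in> A \<Longrightarrow> w p \<in> V) \<Longrightarrow> sum w A \<in> V"
  by (induction A rule: infinite_finite_induct) (auto simp: vsubspace_0 vsubspace_add)

lemma lin_on_0: "lin_on V f \<Longrightarrow> 0 \<in> V \<Longrightarrow> f 0 = 0"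
  unfolding lin_on_def by (metis add.right_neutral add_left_cancel)

lemma lin_on_add: "lin_on V f \<Longrightarrow> x \<in> V \<Longrightarrow> y \<in> V \<Longrightarrow> f (x + y) = f x + f y"
  unfolding lin_on_def by blast

lemma lin_on_scale: "lin_on V f \<Longrightarrow> x \<in> V \<Longrightarrow> f (vscale c x) = vscale c (f x)"
  unfolding lin_on_def by blast

lemma lin_on_sum:
  assumes f: "lin_on V f" and V: "vsubspace V" and w: "\<And>p. p \<in> A \<Longrightarrow> w p \<in> V"
  shows "f (sum w A) = (\<Sum>p\<in>A. f (w p))"
  using w
proof (induction A rule: infinite_finite_induct)
  case (insert x F)
  then have "w x \<in> V" "sum w F \<in> V" "f (sum w F) = (\<Sum>p\<in>F. f (w p))"
    by (auto intro: vsubspace_sum[OF V])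
  then show ?case by (simp only: sum.insert[OF insert(1,2)] lin_on_add[OF f])
qed (simp_all add: lin_on_0[OF f vsubspace_0[OF V]])

lemma vscale_sum: "vscale c (sum w A) = (\<Sum>p\<in>A. vscale c (w p))"
  by (induction A rule: infinite_finite_induct) (auto simp: vscale_def fun_eq_iff algebra_simps)

lemma vscale_0 [simp]: "vscale 0 v = 0" "vscale c 0 = 0"
  by (auto simp: vscale_def fun_eq_iff)

lemma vscale_apply: "vscale c v u = c * v u"
  by (simp add: vscale_def)

lemma vscale_add_left: "vscale (a + b) w = vscale a w + vscale b w"
  by (simp add: vscale_def fun_eq_iff algebra_simps)

lemma vscale_mult: "vscale (c * a) w = vscale c (vscale a w)"
  by (simp add: vscale_def fun_eq_iff algebra_simps)

lemma sum_fun_apply: "(\<Sum>p\<in>A. f p) q = (\<Sum>p\<in>A. f p q)"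
  by (induction A rule: infinite_finite_induct) auto

lemma lin_on_extend:
  fixes f :: "('u \<Rightarrow> 'k::field) \<Rightarrow> ('w \<Rightarrow> 'k)"
  assumes V: "vsubspace V" and f: "lin_on V f"
  shows "\<exists>g. Vector_Spaces.linear vscale vscale g \<and> (\<forall>x\<in>V. g x = f x)"
proof -
  interpret P: vector_space_pair "vscale :: 'k \<Rightarrow> ('u \<Rightarrow> 'k) \<Rightarrow> _" "vscale :: 'k \<Rightarrow> ('w \<Rightarrow> 'k) \<Rightarrow> _"
    by (rule vector_space_pair_vscale)
  obtain B where B: "B \<subseteq> V" "P.vs1.independent B" "V \<subseteq> P.vs1.span B" "card B = P.vs1.dim V"
    by (rule P.vs1.basis_exists[of V])
  obtain g where g: "Vector_Spaces.linear vscale vscale g" "\<forall>x\<in>B. g x = f x"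
    using P.linear_independent_extend[OF B(2)] by blast
  interpret g: Vector_Spaces.linear "vscale :: 'k \<Rightarrow> ('u \<Rightarrow> 'k) \<Rightarrow> _" "vscale :: 'k \<Rightarrow> ('w \<Rightarrow> 'k) \<Rightarrow> _" g
    by (rule g(1))
  have agree: "P.vs1.subspace {x\<in>V. g x = f x}"
    unfolding module.subspace_def[OF P.vs1.module_axioms]
  proof (intro conjI ballI allI)
    show "0 \<in> {x\<in>V. g x = f x}" using vsubspace_0[OF V] lin_on_0[OF f] g.zero by simp
  next
    fix x y assume "x \<in> {x\<in>V. g x = f x}" "y \<in> {x\<in>V. g x = f x}"
    then show "x + y \<in> {x\<in>V. g x = f x}" using vsubspace_add[OF V] lin_on_add[OF f] g.add by simp
  next
    fix c x assume "x \<in> {x\<in>V. g x = f x}"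
    then show "vscale c x \<in> {x\<in>V. g x = f x}" using vsubspace_scale[OF V] lin_on_scale[OF f] g.scale by simp
  qed
  have "x \<in> {x\<in>V. g x = f x}" if "x \<in> P.vs1.span B" for x
    using that by (rule P.vs1.span_subspace_induct[OF _ agree]) (use B(1) g(2) in auto)
  then show ?thesis using g(1) B(3) by blast
qed

lemma vdim_kernel_image:
  fixes f :: "('u \<Rightarrow> 'k::field) \<Rightarrow> ('w \<Rightarrow> 'k)"
  assumes V: "vsubspace V" "fin_dim V" and f: "lin_on V f"
  shows "vdim V = vdim {x\<in>V. f x = 0} + vdim (f ` V)"
proof -
  interpret P: vector_space_pair "vscale :: 'k \<Rightarrow> ('u \<Rightarrow> 'k) \<Rightarrow> _" "vscale :: 'k \<Rightarrow> ('w \<Rightarrow> 'k) \<Rightarrow> _"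
    by (rule vector_space_pair_vscale)
  obtain g where g: "Vector_Spaces.linear vscale vscale g" "\<forall>x\<in>V. g x = f x"
    using lin_on_extend[OF V(1) f] by blast
  obtain F where F: "finite F" "V \<subseteq> P.vs1.span F" using V(2) unfolding fin_dim_def by blast
  have "P.vs1.dim V = P.vs1.dim {x\<in>V. g x = 0} + P.vs2.dim (g ` V)"
    using P.rank_nullity[OF g(1) _ F] V(1) unfolding vsubspace_def by blast
  moreover have "{x\<in>V. g x = 0} = {x\<in>V. f x = 0}" "g ` V = f ` V" using g(2) by auto
  ultimately show ?thesis unfolding vdim_def by simp
qed

lemma is_path_Cons:
  "is_path Q (s, c # w) \<longleftrightarrow> is_path Q (s, w) \<and> c \<in> arrs Q \<and> src Q c = path_end Q (s, w)"
proof -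
  have "(\<forall>k. Suc k < length (c # w) \<longrightarrow> src Q ((c # w) ! k) = tgt Q ((c # w) ! Suc k))
    \<longleftrightarrow> (w \<noteq> [] \<longrightarrow> src Q c = tgt Q (hd w))
        \<and> (\<forall>k. Suc k < length w \<longrightarrow> src Q (w ! k) = tgt Q (w ! Suc k))"
    by (cases w) (auto simp: less_Suc_eq_0_disj)
  then show ?thesis by (cases w) (auto simp: is_path_def path_end_def)
qed

lemma nz_path_Cons:
  "nz_path Q I (s, c # w) \<longleftrightarrow> nz_path Q I (s, w) \<and> c \<in> arrs Q \<and> src Q c = path_end Q (s, w)
     \<and> (w \<noteq> [] \<longrightarrow> (c, hd w) \<notin> I)"
proof -
  have "(\<forall>k. Suc k < length (c # w) \<longrightarrow> ((c # w) ! k, (c # w) ! Suc k) \<notin> I)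
     \<longleftrightarrow> (w \<noteq> [] \<longrightarrow> (c, hd w) \<notin> I) \<and> (\<forall>k. Suc k < length w \<longrightarrow> (w ! k, w ! Suc k) \<notin> I)"
    by (cases w) (auto simp: less_Suc_eq_0_disj)
  then show ?thesis unfolding nz_path_def using is_path_Cons[of Q s c w] by auto
qed

lemma path_end_verts:
  assumes "is_path Q p" "\<forall>a\<in>arrs Q. tgt Q a \<in> verts Q"
  shows "path_end Q p \<in> verts Q"
  using assms by (cases p; cases "snd p") (auto simp: path_end_def is_path_def)

fun word_action :: "('v, 'a, 'u, 'k) rep \<Rightarrow> 'a list \<Rightarrow> ('u \<Rightarrow> 'k) \<Rightarrow> ('u \<Rightarrow> 'k)" where
  "word_action N [] x = x"
| "word_action N (c # cs) x = rmap N c (word_action N cs x)"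

lemma word_action_space:
  assumes N: "is_module Q I N" and p: "is_path Q (s, w @ g)" and x: "x \<in> space N (path_end Q (s, g))"
  shows "word_action N w x \<in> space N (path_end Q (s, w @ g))"
  using p
proof (induction w)
  case (Cons c w)
  then have "is_path Q (s, w @ g)" "c \<in> arrs Q" "src Q c = path_end Q (s, w @ g)"
    using is_path_Cons[of Q s c "w @ g"] by auto
  then show ?case using Cons.IH N unfolding is_module_def by (auto simp: path_end_def)
qed (simp add: x)

definition path_basis :: "'p \<Rightarrow> 'p \<Rightarrow> 'k::field" where
  "path_basis p = (\<lambda>q. if q = p then 1 else 0)"

lemma space_path_module:
  "space (path_module Q S) j = {v. \<forall>q. v q \<noteq> 0 \<longrightarrow> q \<in> S \<and> path_end Q q = j}"
  by (simp add: path_module_def)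

lemma rmap_path_module:
  "rmap (path_module Q S) c v = (\<lambda>q. case snd q of [] \<Rightarrow> 0
     | b # q' \<Rightarrow> (if b = c \<and> q \<in> S \<and> (fst q, q') \<in> S then v (fst q, q') else 0))"
  by (simp add: path_module_def)

lemma vsubspace_path_module: "vsubspace (space (path_module Q S) j)"
  unfolding vsubspace_iff space_path_module by (auto simp: vscale_def) (metis add.right_neutral)+

lemma path_module_basis_expansion:
  assumes "finite S" "v \<in> space (path_module Q S) j"
  shows "v = (\<Sum>p\<in>S. vscale (v p) (path_basis p))"
proof
  fix q
  have "(\<Sum>p\<in>S. vscale (v p) (path_basis p)) q = (\<Sum>p\<in>S. if q = p then v p else 0)"
    by (simp add: sum_fun_apply vscale_def path_basis_def if_distrib cong: if_cong)
  also have "\<dots> = v q" using assms unfolding space_path_module by (cases q) auto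
  finally show "v q = (\<Sum>p\<in>S. vscale (v p) (path_basis p)) q" by simp
qed

lemma path_basis_space: "p \<in> S \<Longrightarrow> path_basis p \<in> space (path_module Q S) (path_end Q p)"
  by (auto simp: space_path_module path_basis_def)

lemma path_basis_term_space:
  assumes "v \<in> space (path_module Q S) j" and "q \<in> S"
  shows "vscale (v q) (path_basis q) \<in> space (path_module Q S) j"
  using assms by (auto simp: space_path_module path_basis_def vscale_def)

lemma rmap_path_module_space:
  assumes "v \<in> space (path_module Q S) (src Q a)"
  shows "rmap (path_module Q S) a v \<in> space (path_module Q S) (tgt Q a)"
  using assms by (auto simp: space_path_module rmap_path_module path_end_def split: list.splits if_splits)

lemma Hom_lin_on: "f \<in> Hom Q M N \<Longrightarrow> i \<in> verts Q \<Longrightarrow> lin_on (space M i) (f i)"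
  unfolding Hom_def by blast

lemma Hom_space: "f \<in> Hom Q M N \<Longrightarrow> i \<in> verts Q \<Longrightarrow> x \<in> space M i \<Longrightarrow> f i x \<in> space N i"
  unfolding Hom_def by blast

lemma Hom_commute:
  "f \<in> Hom Q M N \<Longrightarrow> a \<in> arrs Q \<Longrightarrow> x \<in> space M (src Q a) \<Longrightarrow>
     f (tgt Q a) (rmap M a x) = rmap N a (f (src Q a) x)"
  unfolding Hom_def by blast

lemma Hom_outside:
  "f \<in> Hom Q M N \<Longrightarrow> \<not> (i \<in> verts Q \<and> x \<in> space M i) \<Longrightarrow> f i x = 0"
  unfolding Hom_def by auto

lemma Hom_subspace:
  fixes M :: "('v, 'a, 'x, 'k::field) rep" and N :: "('v, 'a, 'u, 'k) rep"
  assumes N: "is_module Q I N" and arrs_verts: "\<forall>a\<in>arrs Q. src Q a \<in> verts Q"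
  shows "module.subspace hscale (Hom Q M N)"
proof -
  have NS: "\<And>i. i \<in> verts Q \<Longrightarrow> vsubspace (space N i)"
    and NL: "\<And>a. a \<in> arrs Q \<Longrightarrow> lin_on (space N (src Q a)) (rmap N a)"
    using N unfolding is_module_def by blast+
  have N0: "rmap N a 0 = 0" if "a \<in> arrs Q" for a
    using lin_on_0[OF NL vsubspace_0[OF NS]] arrs_verts that by blast
  have "f + g \<in> Hom Q M N" if f: "f \<in> Hom Q M N" and g: "g \<in> Hom Q M N" for f g
  proof -
    have "rmap N a (f (src Q a) x + g (src Q a) x) = rmap N a (f (src Q a) x) + rmap N a (g (src Q a) x)"
      if "a \<in> arrs Q" "x \<in> space M (src Q a)" for a x
      using lin_on_add[OF NL] Hom_space[OF f] Hom_space[OF g] arrs_verts that by blast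
    then show ?thesis using f g unfolding Hom_def
      by (auto simp: lin_on_def vsubspace_add[OF NS] vscale_def fun_eq_iff algebra_simps)
  qed
  moreover have "hscale c f \<in> Hom Q M N" if f: "f \<in> Hom Q M N" for c f
  proof -
    have "rmap N a (vscale c (f (src Q a) x)) = vscale c (rmap N a (f (src Q a) x))"
      if "a \<in> arrs Q" "x \<in> space M (src Q a)" for a x
      using lin_on_scale[OF NL] Hom_space[OF f] arrs_verts that by blast
    moreover have "vscale c (f i x) \<in> space N i" if "i \<in> verts Q" "x \<in> space M i" for i x
      using vsubspace_scale[OF NS] Hom_space[OF f] that by blast
    ultimately show ?thesis using f unfolding Hom_def hscale_def
      by (auto simp: lin_on_def vscale_def fun_eq_iff algebra_simps)
  qed
  moreover have "0 \<in> Hom Q M N"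
    using N0 by (auto simp: Hom_def lin_on_def vsubspace_0[OF NS])
  ultimately show ?thesis
    unfolding module.subspace_def[OF module_hscale] by blast
qed

text \<open>The left ideal \<open>\<Lambda>p\<close> of the nonzero path \<open>p = (s, g)\<close>, with basis \<open>multiples\<close> of the nonzero
  paths \<open>w p\<close>; in \<open>annihilated\<close>, \<open>(s, c # g) \<notin> multiples\<close> says \<open>c p = 0\<close> in \<open>\<Lambda>\<close>.\<close>
locale path_ideal =
  fixes Q :: "('v, 'a) quiver" and I :: "('a \<times> 'a) set" and N :: "('v, 'a, 'u, 'k::field) rep"
    and s :: 'v and g :: "'a list"
  assumes finite_nz_paths: "finite {q. nz_path Q I q}"
    and arrs_verts: "\<forall>a\<in>arrs Q. src Q a \<in> verts Q \<and> tgt Q a \<in> verts Q"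
    and module_N: "is_module Q I N"
    and nz_path_gen: "nz_path Q I (s, g)"
begin

definition multiples :: "('v \<times> 'a list) set" where
  "multiples = {q. nz_path Q I q \<and> fst q = s \<and> (\<exists>w. snd q = w @ g)}"

abbreviation Lp :: "('v, 'a, 'v \<times> 'a list, 'k) rep" where
  "Lp \<equiv> path_module Q multiples"

definition target :: 'v where
  "target = path_end Q (s, g)"

definition annihilated :: "('u \<Rightarrow> 'k) set" where
  "annihilated = {x \<in> space N target.
     \<forall>c\<in>arrs Q. src Q c = target \<and> (s, c # g) \<notin> multiples \<longrightarrow> rmap N c x = 0}"

definition prefix :: "'v \<times> 'a list \<Rightarrow> 'a list" where
  "prefix q = take (length (snd q) - length g) (snd q)"

definition eval_gen :: "('v \<Rightarrow> ('v \<times> 'a list \<Rightarrow> 'k) \<Rightarrow> ('u \<Rightarrow> 'k)) \<Rightarrow> ('u \<Rightarrow> 'k)" where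
  "eval_gen f = f target (path_basis (s, g))"

definition hom_of :: "('u \<Rightarrow> 'k) \<Rightarrow> 'v \<Rightarrow> ('v \<times> 'a list \<Rightarrow> 'k) \<Rightarrow> ('u \<Rightarrow> 'k)" where
  "hom_of x j v = (if j \<in> verts Q \<and> v \<in> space Lp j
     then \<Sum>q\<in>multiples. vscale (v q) (word_action N (prefix q) x) else 0)"

lemma finite_multiples: "finite multiples"
  using finite_nz_paths unfolding multiples_def by (rule finite_subset[rotated]) auto

lemma gen_in_multiples: "(s, g) \<in> multiples"
  using nz_path_gen unfolding multiples_def by auto

lemma multiplesD: "q \<in> multiples \<Longrightarrow> q = (s, prefix q @ g) \<and> nz_path Q I q"
  unfolding multiples_def prefix_def by (cases q) auto

lemma prefix_append [simp]: "prefix (t, w @ g) = w"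
  by (simp add: prefix_def)

lemma target_verts: "target \<in> verts Q"
  using nz_path_gen arrs_verts path_end_verts[of Q "(s, g)"] unfolding target_def nz_path_def by blast

lemma space_N_subspace: "i \<in> verts Q \<Longrightarrow> vsubspace (space N i)"
  using module_N unfolding is_module_def by blast

lemma rmap_N_lin_on: "a \<in> arrs Q \<Longrightarrow> lin_on (space N (src Q a)) (rmap N a)"
  using module_N unfolding is_module_def by blast

lemma rmap_N_relation: "(a, b) \<in> I \<Longrightarrow> x \<in> space N (src Q b) \<Longrightarrow> rmap N a (rmap N b x) = 0"
  using module_N unfolding is_module_def by blast

lemma rmap_N_0: "a \<in> arrs Q \<Longrightarrow> rmap N a 0 = 0"
  using lin_on_0[OF rmap_N_lin_on vsubspace_0[OF space_N_subspace]] arrs_verts by blast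

lemma word_action_prefix_space:
  assumes q: "q \<in> multiples" and x: "x \<in> space N target"
  shows "word_action N (prefix q) x \<in> space N (path_end Q q)"
  using word_action_space[OF module_N, of s "prefix q" g x] multiplesD[OF q] x
  unfolding nz_path_def target_def by metis

lemma Hom_Lp_subspace: "module.subspace hscale (Hom Q Lp N)"
  using Hom_subspace[OF module_N] arrs_verts by blast

lemma rmap_Lp_basis:
  assumes "(s, c # w) \<in> multiples" and "(s, w) \<in> multiples"
  shows "rmap Lp c (path_basis (s, w)) = path_basis (s, c # w)"
  using assms by (auto simp: rmap_path_module path_basis_def fun_eq_iff split: list.split)

lemma Hom_vanishes_on_basis:
  assumes f: "f \<in> Hom Q Lp N" and f0: "eval_gen f = 0"
  shows "(s, w @ g) \<in> multiples \<Longrightarrow> f (path_end Q (s, w @ g)) (path_basis (s, w @ g)) = 0"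
proof (induction w)
  case Nil
  then show ?case using f0 unfolding eval_gen_def target_def by simp
next
  case (Cons c w)
  have c: "nz_path Q I (s, w @ g)" "c \<in> arrs Q" "src Q c = path_end Q (s, w @ g)"
    using multiplesD[OF Cons.prems] nz_path_Cons[of Q I s c "w @ g"] by auto
  then have w: "(s, w @ g) \<in> multiples" unfolding multiples_def by auto
  have "f (tgt Q c) (rmap Lp c (path_basis (s, w @ g))) = rmap N c (f (src Q c) (path_basis (s, w @ g)))"
    using Hom_commute[OF f c(2)] path_basis_space[OF w, of Q] c(3) by simp
  also have "\<dots> = 0"
  proof -
    have "f (src Q c) (path_basis (s, w @ g)) = 0" using Cons.IH w c(3) by (simp add: fun_eq_iff)
    then show ?thesis by (simp only: rmap_N_0[OF c(2)])
  qed
  finally show ?case using rmap_Lp_basis[OF _ w] Cons.prems by (simp add: path_end_def)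
qed

lemma Hom_eq_0_if_eval_gen_eq_0:
  assumes f: "f \<in> Hom Q Lp N" and f0: "eval_gen f = 0"
  shows "f = 0"
proof (rule ext, rule ext)
  fix j v
  show "f j v = 0 j v"
  proof (cases "j \<in> verts Q \<and> v \<in> space Lp j")
    case True
    then have lin: "lin_on (space Lp j) (f j)" and v: "v \<in> space Lp j"
      using Hom_lin_on[OF f] by blast+
    have basis_terms: "f j (vscale (v q) (path_basis q)) = 0" if q: "q \<in> multiples" for q
    proof (cases "v q = 0")
      case True
      then show ?thesis using lin_on_0[OF lin vsubspace_0[OF vsubspace_path_module]] by simp
    next
      case False
      then have j: "path_end Q q = j" using v unfolding space_path_module by blast
      from q obtain w where "q = (s, w @ g)" unfolding multiples_def by (cases q) auto
      then have "f j (path_basis q) = 0" using Hom_vanishes_on_basis[OF f f0, of w] q j by simp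
      then show ?thesis using lin_on_scale[OF lin path_basis_space[OF q, of Q, unfolded j]] by simp
    qed
    have "f j v = f j (\<Sum>q\<in>multiples. vscale (v q) (path_basis q))"
      by (rule arg_cong[where f = "f j"], rule path_module_basis_expansion[OF finite_multiples v])
    also have "\<dots> = (\<Sum>q\<in>multiples. f j (vscale (v q) (path_basis q)))"
      by (rule lin_on_sum[OF lin vsubspace_path_module path_basis_term_space[OF v]])
    also have "\<dots> = 0" using basis_terms by simp
    finally show ?thesis by simp
  qed (simp add: Hom_outside[OF f])
qed

lemma eval_gen_annihilated:
  assumes f: "f \<in> Hom Q Lp N"
  shows "eval_gen f \<in> annihilated"
proof -
  have gen: "path_basis (s, g) \<in> space Lp target"
    using path_basis_space[OF gen_in_multiples] unfolding target_def .
  have "rmap N c (eval_gen f) = 0"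
    if c: "c \<in> arrs Q" "src Q c = target" "(s, c # g) \<notin> multiples" for c
  proof -
    have "rmap Lp c (path_basis (s, g)) = 0"
      using c(3) by (auto simp: rmap_path_module path_basis_def fun_eq_iff split: list.split)
    moreover have "rmap N c (eval_gen f) = f (tgt Q c) (rmap Lp c (path_basis (s, g)))"
      using Hom_commute[OF f c(1), of "path_basis (s, g)"] gen c(2) unfolding eval_gen_def by simp
    ultimately have "rmap N c (eval_gen f) = f (tgt Q c) 0" by simp
    also have "\<dots> = 0"
      using lin_on_0[OF Hom_lin_on[OF f] vsubspace_0[OF vsubspace_path_module]] arrs_verts c(1) by blast
    finally show ?thesis .
  qed
  then show ?thesis
    using Hom_space[OF f target_verts gen] unfolding annihilated_def eval_gen_def by blast
qed

lemma hom_of_term_space: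
  assumes x: "x \<in> space N target" and j: "j \<in> verts Q" and v: "v \<in> space Lp j"
    and q: "q \<in> multiples"
  shows "vscale (v q) (word_action N (prefix q) x) \<in> space N j"
proof (cases "v q = 0")
  case True
  then show ?thesis using vsubspace_0[OF space_N_subspace[OF j]] by simp
next
  case False
  then have "path_end Q q = j" using v unfolding space_path_module by blast
  then show ?thesis using word_action_prefix_space[OF q x] vsubspace_scale space_N_subspace[OF j] by metis
qed

lemma hom_of_lin_on: "j \<in> verts Q \<Longrightarrow> lin_on (space Lp j) (hom_of x j)"
  unfolding lin_on_def hom_of_def
  by (simp add: vsubspace_add[OF vsubspace_path_module] vsubspace_scale[OF vsubspace_path_module]
      vscale_apply vscale_add_left vscale_mult vscale_sum sum.distrib)

lemma hom_of_space:
  "x \<in> space N target \<Longrightarrow> j \<in> verts Q \<Longrightarrow> v \<in> space Lp j \<Longrightarrow> hom_of x j v \<in> space N j"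
  unfolding hom_of_def by (auto intro: vsubspace_sum[OF space_N_subspace] hom_of_term_space)

text \<open>A term \<open>w p\<close> with \<open>a w p = 0\<close> in \<open>\<Lambda>\<close> contributes nothing to \<open>a \<cdot> hom_of x\<close>: either
  \<open>w\<close> is trivial and \<open>x \<in> annihilated\<close>, or \<open>w = d w'\<close> with \<open>a d \<in> I\<close>, which also acts as zero on \<open>N\<close>.\<close>
lemma word_action_vanishes:
  assumes x: "x \<in> annihilated" and a: "a \<in> arrs Q" and q: "q \<in> multiples"
    and end_q: "path_end Q q = src Q a" and not_ext: "(s, a # snd q) \<notin> multiples"
  shows "rmap N a (word_action N (prefix q) x) = 0"
proof (cases "prefix q")
  case Nil
  then have "q = (s, g)" using multiplesD[OF q] by simp
  then show ?thesis using x a end_q not_ext Nil unfolding annihilated_def target_def by simp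
next
  case (Cons d w)
  have q_eq: "q = (s, d # w @ g)" using multiplesD[OF q] Cons by simp
  have nz: "nz_path Q I (s, d # w @ g)" using multiplesD[OF q] q_eq by simp
  then have d: "is_path Q (s, w @ g)" "src Q d = path_end Q (s, w @ g)"
    using nz_path_Cons[of Q I s d "w @ g"] unfolding nz_path_def by simp_all
  have "(a, d) \<in> I"
  proof (rule ccontr)
    assume "(a, d) \<notin> I"
    then have "nz_path Q I (s, a # d # w @ g)"
      using nz_path_Cons[of Q I s a "d # w @ g"] nz a end_q q_eq by simp
    then have "(s, a # snd q) \<in> multiples"
      unfolding multiples_def using q_eq by (auto intro!: exI[of _ "a # d # w"])
    with not_ext show False ..
  qed
  moreover have "word_action N w x \<in> space N (src Q d)"
    using word_action_space[OF module_N d(1)] d(2) x unfolding annihilated_def target_def by simp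
  ultimately show ?thesis using Cons by (simp add: rmap_N_relation)
qed

lemma hom_of_commute:
  assumes x: "x \<in> annihilated" and a: "a \<in> arrs Q" and v: "v \<in> space Lp (src Q a)"
  shows "hom_of x (tgt Q a) (rmap Lp a v) = rmap N a (hom_of x (src Q a) v)"
proof -
  have x_space: "x \<in> space N target" using x unfolding annihilated_def by blast
  have sa: "src Q a \<in> verts Q" and ta: "tgt Q a \<in> verts Q" using arrs_verts a by auto
  define ext where "ext q = (fst q, a # snd q)" for q :: "'v \<times> 'a list"
  define U where "U = {q \<in> multiples. ext q \<in> multiples}"
  let ?W = "\<lambda>q. word_action N (prefix q) x"
  have scale_commute: "rmap N a (vscale (v q) (?W q)) = vscale (v q) (rmap N a (?W q))"
    if q: "q \<in> multiples" for q
  proof (cases "v q = 0")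
    case False
    then have "path_end Q q = src Q a" using v unfolding space_path_module by blast
    then have "?W q \<in> space N (src Q a)" using word_action_prefix_space[OF q x_space] by simp
    then show ?thesis using lin_on_scale[OF rmap_N_lin_on[OF a]] by blast
  qed (simp add: rmap_N_0[OF a])
  have outside_U: "vscale (v q) (rmap N a (?W q)) = 0" if q: "q \<in> multiples - U" for q
  proof (cases "v q = 0")
    case False
    then have "path_end Q q = src Q a" using v unfolding space_path_module by blast
    moreover have "fst q = s" using q multiplesD by (metis DiffD1 fst_conv)
    then have "(s, a # snd q) \<notin> multiples" using q unfolding U_def ext_def by auto
    ultimately show ?thesis using word_action_vanishes[OF x a] q by simp
  qed simp
  have on_U: "vscale (v q) (rmap N a (?W q)) = vscale (rmap Lp a v (ext q)) (?W (ext q))"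
    if q: "q \<in> U" for q
  proof -
    have "q = (s, prefix q @ g)" using q multiplesD unfolding U_def by blast
    then have "ext q = (s, (a # prefix q) @ g)" unfolding ext_def by (metis append_Cons fst_conv snd_conv)
    then have "?W (ext q) = rmap N a (?W q)" by (metis prefix_append word_action.simps(2))
    moreover have "rmap Lp a v (ext q) = v q" using q unfolding U_def ext_def by (simp add: rmap_path_module)
    ultimately show ?thesis by simp
  qed
  have outside_ext_U: "vscale (rmap Lp a v q) (?W q) = 0" if q: "q \<in> multiples - ext ` U" for q
    using q by (cases q) (force simp: rmap_path_module U_def ext_def split: list.split)
  have "rmap N a (hom_of x (src Q a) v) = (\<Sum>q\<in>multiples. rmap N a (vscale (v q) (?W q)))"
    unfolding hom_of_def using sa v hom_of_term_space[OF x_space sa v]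
    by (simp add: lin_on_sum[OF rmap_N_lin_on[OF a] space_N_subspace[OF sa]])
  also have "\<dots> = (\<Sum>q\<in>U. vscale (v q) (rmap N a (?W q)))"
    using scale_commute outside_U finite_multiples by (simp add: U_def sum.mono_neutral_right)
  also have "\<dots> = (\<Sum>q\<in>U. vscale (rmap Lp a v (ext q)) (?W (ext q)))"
    using on_U by simp
  also have "\<dots> = (\<Sum>q\<in>ext ` U. vscale (rmap Lp a v q) (?W q))"
    by (rule sum.reindex[symmetric, unfolded comp_def]) (auto simp: inj_on_def ext_def prod_eq_iff)
  also have "\<dots> = (\<Sum>q\<in>multiples. vscale (rmap Lp a v q) (?W q))"
    using outside_ext_U finite_multiples by (intro sum.mono_neutral_left) (auto simp: U_def)
  also have "\<dots> = hom_of x (tgt Q a) (rmap Lp a v)"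
    unfolding hom_of_def using ta rmap_path_module_space[OF v] by simp
  finally show ?thesis by simp
qed

lemma hom_of_Hom: "x \<in> annihilated \<Longrightarrow> hom_of x \<in> Hom Q Lp N"
  unfolding Hom_def annihilated_def
  by (auto simp: hom_of_lin_on hom_of_space hom_of_commute[unfolded annihilated_def])
    (simp_all add: hom_of_def fun_eq_iff)

lemma eval_gen_hom_of:
  assumes "x \<in> space N target"
  shows "eval_gen (hom_of x) = x"
proof -
  have "path_basis (s, g) \<in> space Lp target"
    using path_basis_space[OF gen_in_multiples] unfolding target_def .
  then have "eval_gen (hom_of x) = (\<Sum>q\<in>multiples. if q = (s, g) then word_action N (prefix q) x else 0)"
    unfolding eval_gen_def hom_of_def using target_verts
    by (simp, intro sum.cong) (auto simp: path_basis_def vscale_def)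
  also have "\<dots> = x" using finite_multiples gen_in_multiples prefix_append[of s "[]"] by simp
  finally show ?thesis .
qed

theorem hdim_Hom_path_ideal: "hdim (Hom Q Lp N) = vdim annihilated"
proof -
  interpret P: vector_space_pair "hscale :: 'k \<Rightarrow> ('v \<Rightarrow> ('v \<times> 'a list \<Rightarrow> 'k) \<Rightarrow> ('u \<Rightarrow> 'k)) \<Rightarrow> _"
      "vscale :: 'k \<Rightarrow> ('u \<Rightarrow> 'k) \<Rightarrow> _"
    by (rule vector_space_pair_hscale_vscale)
  have lin: "Vector_Spaces.linear hscale vscale eval_gen"
    unfolding Vector_Spaces.linear_iff using vector_space_hscale vector_space_vscale
    by (auto simp: eval_gen_def hscale_def)
  interpret L: Vector_Spaces.linear "hscale :: 'k \<Rightarrow> ('v \<Rightarrow> ('v \<times> 'a list \<Rightarrow> 'k) \<Rightarrow> ('u \<Rightarrow> 'k)) \<Rightarrow> _"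
      "vscale :: 'k \<Rightarrow> ('u \<Rightarrow> 'k) \<Rightarrow> _" eval_gen
    by (rule lin)
  have span_Hom: "P.vs1.span (Hom Q Lp N) = Hom Q Lp N"
    using P.vs1.span_eq_iff Hom_Lp_subspace by blast
  have "inj_on eval_gen (P.vs1.span (Hom Q Lp N))"
    unfolding span_Hom using L.inj_on_iff_eq_0[OF Hom_Lp_subspace] Hom_eq_0_if_eval_gen_eq_0 by blast
  moreover have "eval_gen ` Hom Q Lp N = annihilated"
    using eval_gen_annihilated hom_of_Hom eval_gen_hom_of unfolding annihilated_def
    by (auto intro!: image_eqI)
  ultimately show ?thesis
    using P.dim_image_eq_inj_on[OF lin] unfolding hdim_def vdim_def by metis
qed

end

lemma vdim_eq_hdim_Hom_proj_module:
  fixes N :: "('v, 'a, 'u, 'k::field) rep"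
  assumes "finite {q. nz_path Q I q}" and "\<forall>a\<in>arrs Q. src Q a \<in> verts Q \<and> tgt Q a \<in> verts Q"
    and "is_module Q I N" and i: "i \<in> verts Q"
  shows "vdim (space N i) = hdim (Hom Q (proj_module Q I i :: ('v, 'a, 'v \<times> 'a list, 'k) rep) N)"
proof -
  have trivial_path: "nz_path Q I (i, [])" using i unfolding nz_path_def is_path_def by simp
  interpret path_ideal Q I N i "[]" using assms trivial_path by unfold_locales
  have "proj_module Q I i = (Lp :: ('v, 'a, 'v \<times> 'a list, 'k) rep)"
    unfolding proj_module_def multiples_def by simp
  moreover have "(i, [c]) \<in> multiples" if "c \<in> arrs Q" "src Q c = i" for c
    using nz_path_Cons[of Q I i c "[]"] trivial_path that unfolding multiples_def by (simp add: path_end_def)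
  then have "annihilated = space N i" unfolding annihilated_def target_def path_end_def by auto
  ultimately show ?thesis using hdim_Hom_path_ideal by simp
qed

lemma gentle_arrs_verts: "gentle Q I \<Longrightarrow> \<forall>a\<in>arrs Q. src Q a \<in> verts Q \<and> tgt Q a \<in> verts Q"
  unfolding gentle_def by blast

lemma gentle_finite_nz_paths: "gentle Q I \<Longrightarrow> finite {q. nz_path Q I q}"
  unfolding gentle_def by blast

lemma gentle_relation_arrs:
  "gentle Q I \<Longrightarrow> (a, b) \<in> I \<Longrightarrow> a \<in> arrs Q \<and> b \<in> arrs Q \<and> tgt Q b = src Q a"
  unfolding gentle_def by blast

lemma gentle_relation_left_unique:
  assumes gentle: "gentle Q I" and ab: "(a, b) \<in> I" and cb: "(c, b) \<in> I"
  shows "c = a"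
proof -
  let ?A = "{c\<in>arrs Q. src Q c = tgt Q b \<and> (c, b) \<in> I}"
  have b: "b \<in> arrs Q" using gentle_relation_arrs[OF gentle ab] by blast
  have "card ?A \<le> Suc 0" using gentle b unfolding gentle_def by (metis (no_types, lifting) One_nat_def)
  moreover have "finite (arrs Q)" using gentle unfolding gentle_def by blast
  then have "finite ?A" by simp
  moreover have "a \<in> ?A" "c \<in> ?A"
    using gentle_relation_arrs[OF gentle ab] gentle_relation_arrs[OF gentle cb] ab cb by auto
  ultimately show ?thesis using card_le_Suc0_iff_eq by blast
qed

lemma hdim_Hom_R_module:
  fixes N :: "('v, 'a, 'u, 'k::field) rep"
  assumes gentle: "gentle Q I" and N: "is_module Q I N" and ab: "(a, b) \<in> I"
  shows "hdim (Hom Q (R_module Q I b :: ('v, 'a, 'v \<times> 'a list, 'k) rep) N)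
           = vdim {x\<in>space N (src Q a). rmap N a x = 0}"
proof -
  have a: "a \<in> arrs Q" and b: "b \<in> arrs Q" and tb: "tgt Q b = src Q a"
    using gentle_relation_arrs[OF gentle ab] by auto
  have nz_b: "nz_path Q I (src Q b, [b])"
    using b gentle_arrs_verts[OF gentle] unfolding nz_path_def is_path_def by simp
  interpret path_ideal Q I N "src Q b" "[b]"
    using gentle_finite_nz_paths[OF gentle] gentle_arrs_verts[OF gentle] N nz_b by unfold_locales
  have "{q. nz_path Q I q \<and> snd q \<noteq> [] \<and> last (snd q) = b} = multiples"
    unfolding multiples_def nz_path_def is_path_def
    by (auto intro: exI[of _ "butlast _"] append_butlast_last_id[symmetric])
  then have R_eq: "R_module Q I b = (Lp :: ('v, 'a, 'v \<times> 'a list, 'k) rep)"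
    unfolding R_module_def by simp
  have "(src Q b, [c, b]) \<in> multiples \<longleftrightarrow> (c, b) \<notin> I"
    if "c \<in> arrs Q" "src Q c = src Q a" for c
    using nz_path_Cons[of Q I "src Q b" c "[b]"] nz_b that tb unfolding multiples_def
    by (auto simp: path_end_def)
  then have killers: "c \<in> arrs Q \<and> src Q c = src Q a \<and> (src Q b, [c, b]) \<notin> multiples \<longleftrightarrow> c = a"
    for c using a ab gentle_relation_left_unique[OF gentle ab, of c] by blast
  have "(\<forall>c\<in>arrs Q. src Q c = src Q a \<and> (src Q b, [c, b]) \<notin> multiples \<longrightarrow> rmap N c x = 0)
      \<longleftrightarrow> rmap N a x = 0" for x
    using killers by metis
  moreover have "target = src Q a" unfolding target_def path_end_def using tb by simp
  ultimately have "annihilated = {x\<in>space N (src Q a). rmap N a x = 0}"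
    unfolding annihilated_def by simp
  then show ?thesis using hdim_Hom_path_ideal R_eq by simp
qed

theorem lemma4p2:
  fixes Q :: "('v, 'a) quiver" and I :: "('a \<times> 'a) set"
    and N :: "('v, 'a, 'u, 'k::alg_closed_field) rep"
  assumes "gentle Q I"
    and "one_gorenstein Q I TYPE('k)"
    and "gorenstein_projective Q I N"
  shows "(\<forall>i\<in>verts Q.
            vdim (space (Phi Q I N) (Inl i)) = vdim (space N i) \<and>
            vdim (space N i) = hdim (Hom Q (proj_module Q I i :: ('v, 'a, 'v \<times> 'a list, 'k) rep) N))
       \<and> (\<forall>a\<in>cyc_arrows Q I. \<forall>b\<in>arrs Q. (a, b) \<in> I \<longrightarrow>
            int (vdim (space (Phi Q I N) (Inr a))) =
              int (hdim (Hom Q (proj_module Q I (src Q a) :: ('v, 'a, 'v \<times> 'a list, 'k) rep) N))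
              - int (hdim (Hom Q (R_module Q I b :: ('v, 'a, 'v \<times> 'a list, 'k) rep) N)))"
proof -
  have N: "is_module Q I N" using assms(3) unfolding gorenstein_projective_def by blast
  have proj: "vdim (space N i) = hdim (Hom Q (proj_module Q I i :: ('v, 'a, 'v \<times> 'a list, 'k) rep) N)"
    if "i \<in> verts Q" for i
    by (rule vdim_eq_hdim_Hom_proj_module[OF gentle_finite_nz_paths gentle_arrs_verts N that]; fact)
  have "int (vdim (rmap N a ` space N (src Q a))) =
          int (hdim (Hom Q (proj_module Q I (src Q a) :: ('v, 'a, 'v \<times> 'a list, 'k) rep) N))
          - int (hdim (Hom Q (R_module Q I b :: ('v, 'a, 'v \<times> 'a list, 'k) rep) N))"
    if ab: "(a, b) \<in> I" for a b
  proof -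
    have a: "a \<in> arrs Q" using gentle_relation_arrs[OF assms(1) ab] by blast
    then have "src Q a \<in> verts Q" using gentle_arrs_verts[OF assms(1)] by blast
    then have "vsubspace (space N (src Q a))" "fin_dim (space N (src Q a))"
      "lin_on (space N (src Q a)) (rmap N a)"
      using N a unfolding is_module_def by blast+
    then have "vdim (space N (src Q a))
        = vdim {x\<in>space N (src Q a). rmap N a x = 0} + vdim (rmap N a ` space N (src Q a))"
      by (rule vdim_kernel_image)
    then show ?thesis
      using proj[OF \<open>src Q a \<in> verts Q\<close>] hdim_Hom_R_module[OF assms(1) N ab] by simp
  qed
  then show ?thesis using proj by (simp add: Phi_def)
qed

end
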